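(* Consider a ROS~2 application executed on a single processor by the events executor with the two-queue mechanism described in the context, under the standing assumptions of the context, with ties in priority broken in LIFO order of release eligibility. Any element removed from the LIFO child queue is always a highest-priority element of that queue.
   Context: Model: a ROS~2 application is abstracted as a forest of trees of subtasks. Roots are released periodically/sporadically with known integer job priorities; a child subtask is released immediately when its parent completes (and only then), and inherits its parent's priority (fixed job-level priority). Execution is non-preemptive on a single processor; larger priority values mean higher priority. Executor mechanism: a released root subtask is pushed into a priority queue (root_queue); a released child subtask is assigned the value latest_priority and pushed onto a LIFO queue (child_queue); at each scheduling decision the tops of the two queues are compared, the one of greater priority is popped and executed, and latest_priority is set to its priority. *)

theory Defs
  imports Main
begin

text \<open>The application is given by a set of root subtasks and a function
  giving, for each subtask, the list of its children (released when it completes).\<close>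

definition app_forest :: "'s set \<Rightarrow> ('s \<Rightarrow> 's list) \<Rightarrow> bool" where
  "app_forest roots children \<longleftrightarrow>
     (\<forall>p. distinct (children p)) \<and>
     (\<forall>p c. c \<in> set (children p) \<longrightarrow> c \<notin> roots) \<and>
     (\<forall>p q c. c \<in> set (children p) \<longrightarrow> c \<in> set (children q) \<longrightarrow> p = q) \<and>
     wf {(c, p). c \<in> set (children p)}"

text \<open>A queue entry: (subtask, priority, release stamp). The release stamp records the order
  in which entries became eligible (were released); larger = later.\<close>
type_synonym 's entry = "'s \<times> int \<times> nat"

definition prio :: "'s entry \<Rightarrow> int" where "prio e = fst (snd e)"
definition stamp :: "'s entry \<Rightarrow> nat" where "stamp e = snd (snd e)"

record 's exec_state =
  root_queue :: "'s entry list"      \<comment> \<open>priority queue, stored as an unordered list\<close>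
  child_queue :: "'s entry list"     \<comment> \<open>LIFO stack; head = top\<close>
  latest_priority :: int
  running :: "'s option"
  clock :: nat                        \<comment> \<open>next release stamp\<close>

definition beats :: "'s entry \<Rightarrow> 's entry \<Rightarrow> bool" where
  "beats a b \<longleftrightarrow> prio b < prio a \<or> (prio b = prio a \<and> stamp b < stamp a)"

definition is_rq_top :: "'s entry list \<Rightarrow> 's entry \<Rightarrow> bool" where
  "is_rq_top rq e \<longleftrightarrow> e \<in> set rq \<and> (\<forall>x\<in>set rq. x = e \<or> \<not> beats x e)"

datatype 's label =
    ReleaseRoot 's int
  | PopRoot "'s entry"
  | PopChild "'s entry"
  | Complete 's

fun push_all :: "int \<Rightarrow> nat \<Rightarrow> 's list \<Rightarrow> 's entry list \<Rightarrow> 's entry list" where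
  "push_all p n [] q = q"
| "push_all p n (c # cs) q = push_all p (Suc n) cs ((c, p, n) # q)"

inductive step :: "'s set \<Rightarrow> ('s \<Rightarrow> 's list) \<Rightarrow> 's exec_state \<Rightarrow> 's label \<Rightarrow> 's exec_state \<Rightarrow> bool"
  for roots children where
  release_root:
    "r \<in> roots \<Longrightarrow>
     step roots children s (ReleaseRoot r p)
       (s\<lparr>root_queue := (r, p, clock s) # root_queue s, clock := Suc (clock s)\<rparr>)"
| pop_root:
    "running s = None \<Longrightarrow> is_rq_top (root_queue s) e \<Longrightarrow>
     (child_queue s = [] \<or> \<not> beats (hd (child_queue s)) e) \<Longrightarrow>
     step roots children s (PopRoot e)
       (s\<lparr>root_queue := remove1 e (root_queue s), latest_priority := prio e,
          running := Some (fst e)\<rparr>)"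
| pop_child:
    "running s = None \<Longrightarrow> child_queue s = c # rest \<Longrightarrow>
     (root_queue s = [] \<or> (\<exists>e. is_rq_top (root_queue s) e \<and> beats c e)) \<Longrightarrow>
     step roots children s (PopChild c)
       (s\<lparr>child_queue := rest, latest_priority := prio c, running := Some (fst c)\<rparr>)"
| complete:
    "running s = Some t \<Longrightarrow>
     step roots children s (Complete t)
       (s\<lparr>child_queue := push_all (latest_priority s) (clock s) (children t) (child_queue s),
          clock := clock s + length (children t), running := None\<rparr>)"

definition init_state :: "int \<Rightarrow> 's exec_state" where
  "init_state p0 = \<lparr>root_queue = [], child_queue = [], latest_priority = p0,
                    running = None, clock = 0\<rparr>"

inductive reachable :: "'s set \<Rightarrow> ('s \<Rightarrow> 's list) \<Rightarrow> 's exec_state \<Rightarrow> bool"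
  for roots children where
  init: "reachable roots children (init_state p0)"
| step: "reachable roots children s \<Longrightarrow> step roots children s l s' \<Longrightarrow>
         reachable roots children s'"

end

theory Submission
  imports Defs
begin

text \<open>The child queue is always sorted by non-increasing priority, and while a subtask runs,
  no queued child has priority above latest_priority. Children are pushed with
  latest_priority, so pushing keeps the queue sorted; popping a child makes
  latest_priority the priority of the former head, and popping a root happens only
  when the root is at least as urgent as the head. Hence the head that is popped is a
  highest-priority element.\<close>

abbreviation prio_sorted :: "'s entry list \<Rightarrow> bool" where
  "prio_sorted q \<equiv> sorted_wrt (\<lambda>a b. prio b \<le> prio a) q"

definition child_queue_invariant :: "'s exec_state \<Rightarrow> bool" where
  "child_queue_invariant s \<longleftrightarrow> prio_sorted (child_queue s) \<and>
     (running s \<noteq> None \<longrightarrow> (\<forall>x\<in>set (child_queue s). prio x \<le> latest_priority s))"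

lemma prio_push_all_le:
  assumes "\<forall>x\<in>set q. prio x \<le> p"
  shows "\<forall>x\<in>set (push_all p n cs q). prio x \<le> p"
  using assms by (induction p n cs q rule: push_all.induct) (auto simp: prio_def)

lemma prio_sorted_push_all:
  assumes "prio_sorted q" and "\<forall>x\<in>set q. prio x \<le> p"
  shows "prio_sorted (push_all p n cs q)"
  using assms by (induction p n cs q rule: push_all.induct) (auto simp: prio_def)

lemma child_queue_invariant_step:
  assumes inv: "child_queue_invariant s" and "step roots children s l s'"
  shows "child_queue_invariant s'"
  using assms(2)
proof cases
  case (pop_root e)
  have "prio x \<le> prio e" if "x \<in> set (child_queue s)" for x
  proof -
    obtain h rest where q: "child_queue s = h # rest"
      using \<open>x \<in> set (child_queue s)\<close> by (cases "child_queue s") auto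
    have "prio h \<le> prio e"
      using pop_root q by (auto simp: beats_def)
    moreover have "prio x \<le> prio h"
      using inv q that by (auto simp: child_queue_invariant_def)
    ultimately show ?thesis by simp
  qed
  then show ?thesis
    using inv pop_root by (simp add: child_queue_invariant_def)
next
  case (pop_child c rest)
  then show ?thesis
    using inv by (auto simp: child_queue_invariant_def)
next
  case (complete t)
  then show ?thesis
    using inv prio_sorted_push_all prio_push_all_le by (auto simp: child_queue_invariant_def)
qed (use inv in \<open>auto simp: child_queue_invariant_def\<close>)

lemma reachable_child_queue_invariant:
  "reachable roots children s \<Longrightarrow> child_queue_invariant s"
proof (induction rule: reachable.induct)
  case (init p0)
  show ?case by (simp add: child_queue_invariant_def init_state_def)
next
  case (step s l s')
  then show ?case by (blast intro: child_queue_invariant_step)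
qed

theorem lemma5:
  fixes roots :: "'s set" and children :: "'s \<Rightarrow> 's list"
  assumes "app_forest roots children"
    and "reachable roots children s"
    and "step roots children s (PopChild c) s'"
  shows "c \<in> set (child_queue s) \<and> (\<forall>x\<in>set (child_queue s). prio x \<le> prio c)"
  using assms(3)
proof cases
  case (pop_child rest)
  have "prio_sorted (child_queue s)"
    using reachable_child_queue_invariant[OF assms(2)] by (simp add: child_queue_invariant_def)
  then show ?thesis
    using pop_child by auto
qed

end
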